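(* Let $\tau_{U,Q}:U\to Q$ be a fibre bundle with local coordinates $(q^i,u^a)$, let $\Gamma:U\to TQ$ be smooth with $\tau_{TQ}\circ\Gamma=\tau_{U,Q}$, locally $\Gamma(q,u)=(q^i,\Gamma^i(q,u))$, and let $L:U\to\mathbb R$ be smooth. Let $\Sigma=\{\mu\in T^*_{\Gamma(u)}TQ:\ u\in U,\ (T_u\Gamma)^*\mu=dL(u)\}$ and define $H(q,p,u)=p_i\Gamma^i(q,u)-L(q,u)$. A curve $\sigma:[t_0,t_1]\to Q$ (in a chart) is a solution of the generalized variational problem determined by $\Sigma$ if and only if there exist curves $u(t)$ and $\tilde\mu(t)=(\tilde\mu_i(t))$ such that $$\frac{d\tilde\mu_i}{dt}=-\frac{\partial H}{\partial q^i}(q,\tilde\mu,u),\qquad \frac{\partial H}{\partial u^a}(q,\tilde\mu,u)=0,\qquad \frac{dq^i}{dt}=\frac{\partial H}{\partial p_i}(q,\tilde\mu,u)=\Gamma^i(q,u).$$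
   Context: A solution of the generalized variational problem determined by $\Sigma\subset T^*TQ$ is a curve $\sigma$ for which there exists a curve $\mu:[t_0,t_1]\to\Sigma$ with $\pi_{TTQ}(\mu(t))=\dot\sigma(t)$ and $\int_{t_0}^{t_1}\langle\mu(t),X^T(t,\dot\sigma(t))\rangle dt=0$ for all time-dependent vector fields $X=X^i(t,q)\partial_{q^i}$ vanishing at $(t_0,\sigma(t_0))$ and $(t_1,\sigma(t_1))$, where $X^T=X^i\partial_{q^i}+(\partial_tX^i+\dot q^j\partial_{q^j}X^i)\partial_{\dot q^i}$. Coordinates on $T^*TQ$: $\mu=\mu_idq^i+\tilde\mu_id\dot q^i$. *)

theory Defs
  imports "HOL-Analysis.Analysis"
begin

fun iter_deriv :: "'a::real_normed_vector list \<Rightarrow> ('a \<Rightarrow> 'b::real_normed_vector) \<Rightarrow> 'a \<Rightarrow> 'b" where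
  "iter_deriv [] f = f"
| "iter_deriv (v # vs) f = (\<lambda>x. frechet_derivative (iter_deriv vs f) (at x) v)"

definition smooth_fun :: "('a::euclidean_space \<Rightarrow> 'b::real_normed_vector) \<Rightarrow> bool" where
  "smooth_fun f \<longleftrightarrow> (\<forall>vs x. iter_deriv vs f differentiable (at x))"

text \<open>Local chart: Q = R^n (coordinates q), U = Q x R^m (coordinates (q,u)),
  TQ = R^n x R^n (coordinates (q, qdot)), T*TQ element = (base point in TQ, (mu_i, mu~_i)).
  Gamma is given by its fibre part Gam(q,u) = (Gamma^i(q,u)).\<close>

definition Gamma_map :: "((real^'n) \<times> (real^'m) \<Rightarrow> real^'n) \<Rightarrow> (real^'n) \<times> (real^'m) \<Rightarrow> (real^'n) \<times> (real^'n)" where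
  "Gamma_map Gam z = (fst z, Gam z)"

definition Sigma_set ::
  "((real^'n) \<times> (real^'m) \<Rightarrow> real^'n) \<Rightarrow> ((real^'n) \<times> (real^'m) \<Rightarrow> real)
     \<Rightarrow> (((real^'n) \<times> (real^'n)) \<times> ((real^'n) \<times> (real^'n))) set" where
  "Sigma_set Gam L = {(Gamma_map Gam z, (m, mt)) | z m mt.
      \<forall>w. m \<bullet> fst (frechet_derivative (Gamma_map Gam) (at z) w)
          + mt \<bullet> snd (frechet_derivative (Gamma_map Gam) (at z) w)
        = frechet_derivative L (at z) w}"

text \<open>Complete lift X^T(t,(q,qdot)) = (X(t,q), d_t X + qdot^j d_{q^j} X).\<close>
definition complete_lift :: "(real \<times> (real^'n) \<Rightarrow> real^'n) \<Rightarrow> real \<Rightarrow> (real^'n) \<times> (real^'n) \<Rightarrow> (real^'n) \<times> (real^'n)" where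
  "complete_lift X t qv = (X (t, fst qv), frechet_derivative X (at (t, fst qv)) (1, snd qv))"

definition pairing :: "(real^'n) \<times> (real^'n) \<Rightarrow> (real^'n) \<times> (real^'n) \<Rightarrow> real" where
  "pairing mu w = fst mu \<bullet> fst w + snd mu \<bullet> snd w"

text \<open>Solution of the generalized variational problem determined by Sigma.
  Curves are smooth (restrictions to [t0,t1] of smooth curves on R);
  test vector fields are smooth time-dependent vector fields.\<close>
definition gen_var_solution ::
  "(((real^'n) \<times> (real^'n)) \<times> ((real^'n) \<times> (real^'n))) set \<Rightarrow> real \<Rightarrow> real \<Rightarrow> (real \<Rightarrow> real^'n) \<Rightarrow> bool" where
  "gen_var_solution Sig t0 t1 \<sigma> \<longleftrightarrow>
     (\<exists>\<mu> :: real \<Rightarrow> ((real^'n) \<times> (real^'n)) \<times> ((real^'n) \<times> (real^'n)).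
        smooth_fun \<mu> \<and> (\<forall>t\<in>{t0..t1}. \<mu> t \<in> Sig) \<and>
        (\<forall>t\<in>{t0..t1}. fst (\<mu> t) = (\<sigma> t, vector_derivative \<sigma> (at t))) \<and>
        (\<forall>X :: real \<times> (real^'n) \<Rightarrow> real^'n.
            smooth_fun X \<and> X (t0, \<sigma> t0) = 0 \<and> X (t1, \<sigma> t1) = 0 \<longrightarrow>
            integral {t0..t1}
              (\<lambda>t. pairing (snd (\<mu> t)) (complete_lift X t (\<sigma> t, vector_derivative \<sigma> (at t)))) = 0))"

definition Ham :: "((real^'n) \<times> (real^'m) \<Rightarrow> real^'n) \<Rightarrow> ((real^'n) \<times> (real^'m) \<Rightarrow> real)
     \<Rightarrow> real^'n \<Rightarrow> real^'n \<Rightarrow> real^'m \<Rightarrow> real" where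
  "Ham Gam L q p u = p \<bullet> Gam (q, u) - L (q, u)"

definition dH_dq :: "((real^'n) \<times> (real^'m) \<Rightarrow> real^'n) \<Rightarrow> ((real^'n) \<times> (real^'m) \<Rightarrow> real)
     \<Rightarrow> real^'n \<Rightarrow> real^'n \<Rightarrow> real^'m \<Rightarrow> 'n \<Rightarrow> real" where
  "dH_dq Gam L q p u i = frechet_derivative (\<lambda>q'. Ham Gam L q' p u) (at q) (axis i 1)"

definition dH_dp :: "((real^'n) \<times> (real^'m) \<Rightarrow> real^'n) \<Rightarrow> ((real^'n) \<times> (real^'m) \<Rightarrow> real)
     \<Rightarrow> real^'n \<Rightarrow> real^'n \<Rightarrow> real^'m \<Rightarrow> 'n \<Rightarrow> real" where
  "dH_dp Gam L q p u i = frechet_derivative (\<lambda>p'. Ham Gam L q p' u) (at p) (axis i 1)"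

definition dH_du :: "((real^'n) \<times> (real^'m) \<Rightarrow> real^'n) \<Rightarrow> ((real^'n) \<times> (real^'m) \<Rightarrow> real)
     \<Rightarrow> real^'n \<Rightarrow> real^'n \<Rightarrow> real^'m \<Rightarrow> 'm \<Rightarrow> real" where
  "dH_du Gam L q p u a = frechet_derivative (\<lambda>u'. Ham Gam L q p u') (at u) (axis a 1)"

end

theory Submission
  imports Defs
begin

text \<open>A covector \<open>(m, p)\<close> at \<open>\<Gamma>(q, u)\<close> lies in \<open>\<Sigma>\<close> iff the linear form
  \<open>w \<mapsto> m \<bullet> fst w + p \<bullet> D\<Gamma> w - DL w\<close> vanishes on the standard basis, i.e. iff
  \<open>m = -\<partial>H/\<partial>q\<close> and \<open>\<partial>H/\<partial>u = 0\<close>; the base point condition says \<open>\<sigma>' = \<Gamma>(\<sigma>, u) = \<partial>H/\<partial>p\<close>.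
  Along \<open>\<sigma>\<close>, the pairing of \<open>(m, p)\<close> with the complete lift \<open>X\<^sup>T\<close> equals
  \<open>(m - p') \<bullet> X + (p \<bullet> X)'\<close>, so the variational condition holds for all \<open>X\<close> vanishing at the
  endpoints iff \<open>p' = m\<close> (du Bois-Reymond, with test fields \<open>\<phi>(t) e\<^sub>i\<close>, \<open>\<phi>\<close> a polynomial
  vanishing at \<open>t\<^sub>0, t\<^sub>1\<close>, and Stone-Weierstrass). This is the remaining equation
  \<open>p' = -\<partial>H/\<partial>q\<close>.\<close>

lemma iter_deriv_append: "iter_deriv (vs @ ws) f = iter_deriv vs (iter_deriv ws f)"
  by (induction vs) auto

lemma smooth_fun_iter_deriv: "smooth_fun f \<Longrightarrow> smooth_fun (iter_deriv vs f)"
  unfolding smooth_fun_def by (metis iter_deriv_append)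

lemma smooth_fun_differentiable: "smooth_fun f \<Longrightarrow> f differentiable (at x)"
  unfolding smooth_fun_def by (metis iter_deriv.simps(1))

lemma smooth_fun_has_derivative:
  "smooth_fun f \<Longrightarrow> (f has_derivative frechet_derivative f (at x)) (at x)"
  using smooth_fun_differentiable frechet_derivative_works by blast

lemma smooth_fun_continuous_on: "smooth_fun f \<Longrightarrow> continuous_on S f"
  by (meson differentiable_at_imp_differentiable_on differentiable_imp_continuous_on
      smooth_fun_differentiable)

lemma smooth_fun_has_vector_derivative:
  fixes f :: "real \<Rightarrow> 'b::real_normed_vector"
  shows "smooth_fun f \<Longrightarrow> (f has_vector_derivative vector_derivative f (at t)) (at t)"
  using smooth_fun_differentiable vector_derivative_works by blast

lemma iter_deriv_bounded_linear:
  assumes "bounded_linear h" "smooth_fun f"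
  shows "iter_deriv vs (\<lambda>x. h (f x)) = (\<lambda>x. h (iter_deriv vs f x))"
proof (induction vs)
  case (Cons v vs)
  have "((\<lambda>x. h (iter_deriv vs f x)) has_derivative
      (\<lambda>y. h (frechet_derivative (iter_deriv vs f) (at x) y))) (at x)" for x
    using bounded_linear.has_derivative[OF assms(1)]
      smooth_fun_has_derivative[OF smooth_fun_iter_deriv[OF assms(2)]] .
  then have "frechet_derivative (\<lambda>x. h (iter_deriv vs f x)) (at x) =
      (\<lambda>y. h (frechet_derivative (iter_deriv vs f) (at x) y))" for x
    by (rule frechet_derivative_at[symmetric])
  then show ?case
    by (simp add: Cons)
qed simp

lemma smooth_fun_bounded_linear:
  assumes "bounded_linear h" "smooth_fun f"
  shows "smooth_fun (\<lambda>x. h (f x))"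
  unfolding smooth_fun_def iter_deriv_bounded_linear[OF assms] differentiable_def
  using bounded_linear.has_derivative[OF assms(1)]
    smooth_fun_has_derivative[OF smooth_fun_iter_deriv[OF assms(2)]] by blast

lemma iter_deriv_Pair:
  assumes "smooth_fun f" "smooth_fun g"
  shows "iter_deriv vs (\<lambda>x. (f x, g x)) = (\<lambda>x. (iter_deriv vs f x, iter_deriv vs g x))"
proof (induction vs)
  case (Cons v vs)
  have "((\<lambda>x. (iter_deriv vs f x, iter_deriv vs g x)) has_derivative
      (\<lambda>y. (frechet_derivative (iter_deriv vs f) (at x) y,
            frechet_derivative (iter_deriv vs g) (at x) y))) (at x)" for x
    using smooth_fun_has_derivative[OF smooth_fun_iter_deriv[OF assms(1)]]
      smooth_fun_has_derivative[OF smooth_fun_iter_deriv[OF assms(2)]]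
    by (rule has_derivative_Pair)
  then have "frechet_derivative (\<lambda>x. (iter_deriv vs f x, iter_deriv vs g x)) (at x) =
      (\<lambda>y. (frechet_derivative (iter_deriv vs f) (at x) y,
            frechet_derivative (iter_deriv vs g) (at x) y))" for x
    by (rule frechet_derivative_at[symmetric])
  then show ?case
    by (simp add: Cons)
qed simp

lemma smooth_fun_Pair:
  assumes "smooth_fun f" "smooth_fun g"
  shows "smooth_fun (\<lambda>x. (f x, g x))"
  unfolding smooth_fun_def iter_deriv_Pair[OF assms]
  by (metis assms differentiable_def has_derivative_Pair smooth_fun_differentiable
      smooth_fun_iter_deriv)

lemma smooth_fun_vector_derivative:
  fixes f :: "real \<Rightarrow> 'b::real_normed_vector"
  assumes "smooth_fun f"
  shows "smooth_fun (\<lambda>t. vector_derivative f (at t))"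
proof -
  have "frechet_derivative f (at t) 1 = vector_derivative f (at t)" for t
    using smooth_fun_has_vector_derivative[OF assms, of t]
    by (simp add: has_vector_derivative_def frechet_derivative_at[symmetric])
  then have "iter_deriv [1] f = (\<lambda>t. vector_derivative f (at t))"
    by auto
  then show ?thesis
    using smooth_fun_iter_deriv[OF assms, of "[1]"] by simp
qed

lemma has_derivative_time_profile:
  fixes c :: "'b::real_normed_vector"
  assumes "(\<phi> has_real_derivative \<phi>') (at (fst x))"
  shows "((\<lambda>x::real \<times> 'a::real_normed_vector. \<phi> (fst x) *\<^sub>R c)
           has_derivative (\<lambda>h. (fst h * \<phi>') *\<^sub>R c)) (at x)"
proof -
  have "(\<phi> has_derivative (*) \<phi>') (at (fst x))"
    using assms has_field_derivative_def by blast
  from diff_chain_at[OF has_derivative_fst[OF has_derivative_ident] this]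
  have "((\<lambda>x::real \<times> 'a. \<phi> (fst x)) has_derivative (\<lambda>h. fst h * \<phi>')) (at x)"
    by (simp add: o_def mult.commute)
  then show ?thesis
    by (rule has_derivative_scaleR_left)
qed

lemma iter_deriv_polynomial_profile:
  fixes c :: "'b::real_normed_vector"
  assumes "real_polynomial_function \<phi>"
  shows "\<exists>\<psi>. real_polynomial_function \<psi> \<and>
           iter_deriv vs (\<lambda>x::real \<times> 'a::real_normed_vector. \<phi> (fst x) *\<^sub>R c) = (\<lambda>x. \<psi> (fst x) *\<^sub>R c)"
proof (induction vs)
  case (Cons v vs)
  then obtain \<psi> where \<psi>: "real_polynomial_function \<psi>"
    "iter_deriv vs (\<lambda>x::real \<times> 'a. \<phi> (fst x) *\<^sub>R c) = (\<lambda>x. \<psi> (fst x) *\<^sub>R c)"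
    by blast
  obtain \<psi>' where \<psi>': "real_polynomial_function \<psi>'" "\<And>s. (\<psi> has_real_derivative \<psi>' s) (at s)"
    using has_real_derivative_polynomial_function[OF \<psi>(1)] by blast
  have "frechet_derivative (\<lambda>x::real \<times> 'a. \<psi> (fst x) *\<^sub>R c) (at x) =
      (\<lambda>h. (fst h * \<psi>' (fst x)) *\<^sub>R c)" for x
    by (rule frechet_derivative_at[OF has_derivative_time_profile[OF \<psi>'(2)], symmetric])
  then have "iter_deriv (v # vs) (\<lambda>x::real \<times> 'a. \<phi> (fst x) *\<^sub>R c) = (\<lambda>x. (fst v * \<psi>' (fst x)) *\<^sub>R c)"
    by (simp add: \<psi>(2))
  moreover have "real_polynomial_function (\<lambda>s. fst v * \<psi>' s)"
    using \<psi>'(1) by auto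
  ultimately show ?case
    by blast
qed (use assms in auto)

lemma smooth_fun_polynomial_profile:
  fixes c :: "'b::real_normed_vector"
  assumes "real_polynomial_function \<phi>"
  shows "smooth_fun (\<lambda>x::real \<times> 'a::euclidean_space. \<phi> (fst x) *\<^sub>R c)"
  unfolding smooth_fun_def
proof (intro allI)
  fix vs and x :: "real \<times> 'a"
  obtain \<psi> where \<psi>: "real_polynomial_function \<psi>"
    "iter_deriv vs (\<lambda>x::real \<times> 'a. \<phi> (fst x) *\<^sub>R c) = (\<lambda>x. \<psi> (fst x) *\<^sub>R c)"
    using iter_deriv_polynomial_profile[OF assms] by blast
  obtain \<psi>' where "\<And>s. (\<psi> has_real_derivative \<psi>' s) (at s)"
    using has_real_derivative_polynomial_function[OF \<psi>(1)] by blast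
  then show "iter_deriv vs (\<lambda>x::real \<times> 'a. \<phi> (fst x) *\<^sub>R c) differentiable at x"
    unfolding \<psi>(2) differentiable_def by (blast intro: has_derivative_time_profile)
qed

lemma eq_0_if_abs_le_mult_all_pos:
  fixes x C :: real
  assumes "0 \<le> C" and bound: "\<And>e. e > 0 \<Longrightarrow> \<bar>x\<bar> \<le> e * C"
  shows "x = 0"
proof -
  have "\<bar>x\<bar> \<le> 0 + e" if "e > 0" for e
  proof -
    have "e / (C + 1) * C \<le> e"
      using \<open>0 \<le> C\<close> \<open>e > 0\<close> by (simp add: field_simps)
    then show ?thesis
      using bound[of "e / (C + 1)"] \<open>0 \<le> C\<close> \<open>e > 0\<close> by simp
  qed
  then have "\<bar>x\<bar> \<le> 0"
    by (rule field_le_epsilon)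
  then show ?thesis
    by simp
qed

lemma square_weighted_integral_eq_0_if_orthogonal_polynomials:
  fixes g w :: "real \<Rightarrow> real"
  assumes g: "continuous_on {a..b} g" and w: "continuous_on {a..b} w"
    and w_nonneg: "\<And>t. t \<in> {a..b} \<Longrightarrow> 0 \<le> w t"
    and orth: "\<And>p. real_polynomial_function p \<Longrightarrow> integral {a..b} (\<lambda>t. g t * w t * p t) = 0"
  shows "integral {a..b} (\<lambda>t. g t * g t * w t) = 0"
proof -
  define I where "I = integral {a..b} (\<lambda>t. g t * g t * w t)"
  define C where "C = integral {a..b} (\<lambda>t. \<bar>g t\<bar> * w t)"
  have C_nonneg: "0 \<le> C"
    unfolding C_def
    by (intro integral_nonneg integrable_continuous_interval continuous_intros g w)
      (simp add: w_nonneg)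
  \<comment> \<open>Replacing the second factor \<open>g\<close> by a uniformly \<open>e\<close>-close polynomial costs at most \<open>e * C\<close>.\<close>
  have bound: "\<bar>I\<bar> \<le> e * C" if "e > 0" for e
  proof -
    obtain p where p: "polynomial_function p" "\<forall>t\<in>{a..b}. norm (g t - p t) < e"
      using Stone_Weierstrass_polynomial_function[OF compact_Icc g \<open>e > 0\<close>] by blast
    have p_cont: "continuous_on {a..b} p"
      using continuous_on_polymonial_function[OF p(1)] .
    have int_diff: "(\<lambda>t. g t * (g t - p t) * w t) integrable_on {a..b}"
      by (intro integrable_continuous_interval continuous_intros g p_cont w)
    have int_p: "(\<lambda>t. g t * w t * p t) integrable_on {a..b}"
      by (intro integrable_continuous_interval continuous_intros g p_cont w)
    have "I = integral {a..b} (\<lambda>t. g t * (g t - p t) * w t + g t * w t * p t)"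
      unfolding I_def by (rule integral_cong) (simp add: algebra_simps)
    also have "\<dots> = integral {a..b} (\<lambda>t. g t * (g t - p t) * w t)"
      using integral_add[OF int_diff int_p] orth[of p] p(1) by (simp add: real_polynomial_function_eq)
    also have "norm \<dots> \<le> integral {a..b} (\<lambda>t. e * (\<bar>g t\<bar> * w t))"
    proof (rule integral_norm_bound_integral[OF int_diff])
      show "(\<lambda>t. e * (\<bar>g t\<bar> * w t)) integrable_on {a..b}"
        by (intro integrable_continuous_interval continuous_intros g w)
      fix t assume t: "t \<in> {a..b}"
      have "norm (g t * (g t - p t) * w t) = \<bar>g t\<bar> * \<bar>g t - p t\<bar> * w t"
        using w_nonneg[OF t] by (simp add: abs_mult)
      also have "\<dots> \<le> \<bar>g t\<bar> * e * w t"
      proof -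
        have "\<bar>g t - p t\<bar> \<le> e"
          using p(2) t by (simp add: less_imp_le)
        then have "\<bar>g t\<bar> * \<bar>g t - p t\<bar> \<le> \<bar>g t\<bar> * e"
          by (rule mult_left_mono) simp
        then show ?thesis
          using w_nonneg[OF t] by (rule mult_right_mono)
      qed
      finally show "norm (g t * (g t - p t) * w t) \<le> e * (\<bar>g t\<bar> * w t)"
        by (simp add: algebra_simps)
    qed
    finally show ?thesis
      unfolding C_def by simp
  qed
  show ?thesis
    using eq_0_if_abs_le_mult_all_pos[OF C_nonneg bound] unfolding I_def .
qed

lemma square_weighted_integral_eq_0_imp_zero:
  fixes g :: "real \<Rightarrow> real"
  assumes "a < b" and g: "continuous_on {a..b} g"
    and "integral {a..b} (\<lambda>t. g t * g t * ((t - a) * (b - t))) = 0"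
  shows "\<forall>t\<in>{a..b}. g t = 0"
proof -
  have cont: "continuous_on {a..b} (\<lambda>t. g t * g t * ((t - a) * (b - t)))"
    by (intro continuous_intros g)
  have "((\<lambda>t. g t * g t * ((t - a) * (b - t))) has_integral 0) (cbox a b)"
    using assms(3) cont integrable_continuous_interval by (metis box_real(2) has_integral_integral)
  then have zero_product: "g t * g t * ((t - a) * (b - t)) = 0" if "t \<in> {a..b}" for t
    using cont that \<open>a < b\<close>
    by (intro has_integral_0_cbox_imp_0) (auto simp: box_real)
  have "g t = 0" if "t \<in> {a<..<b}" for t
  proof -
    have "(t - a) * (b - t) > 0"
      using that by simp
    then show ?thesis
      using zero_product[of t] that by simp
  qed
  moreover have "closure {a<..<b} = {a..b}"
    using \<open>a < b\<close> by simp
  ultimately show ?thesis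
    using continuous_constant_on_closure[of "{a<..<b}" g] g by metis
qed

lemma fundamental_lemma_polynomial:
  fixes g :: "real \<Rightarrow> real"
  assumes "a < b" and g: "continuous_on {a..b} g"
    and orth: "\<And>p. real_polynomial_function p \<Longrightarrow>
      integral {a..b} (\<lambda>t. g t * ((t - a) * (b - t) * p t)) = 0"
  shows "\<forall>t\<in>{a..b}. g t = 0"
proof (rule square_weighted_integral_eq_0_imp_zero[OF \<open>a < b\<close> g])
  show "integral {a..b} (\<lambda>t. g t * g t * ((t - a) * (b - t))) = 0"
  proof (rule square_weighted_integral_eq_0_if_orthogonal_polynomials[OF g])
    show "continuous_on {a..b} (\<lambda>t. (t - a) * (b - t))"
      by (intro continuous_intros)
    show "\<And>t. t \<in> {a..b} \<Longrightarrow> 0 \<le> (t - a) * (b - t)"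
      by auto
    show "integral {a..b} (\<lambda>t. g t * ((t - a) * (b - t)) * p t) = 0"
      if "real_polynomial_function p" for p
      using orth[OF that] by (simp add: mult.assoc)
  qed
qed

lemma frechet_derivative_Gamma_map:
  assumes "smooth_fun Gam"
  shows "frechet_derivative (Gamma_map Gam) (at z) w = (fst w, frechet_derivative Gam (at z) w)"
proof -
  have "(Gamma_map Gam has_derivative (\<lambda>w. (fst w, frechet_derivative Gam (at z) w))) (at z)"
    unfolding Gamma_map_def[abs_def]
    by (rule has_derivative_Pair[OF has_derivative_fst[OF has_derivative_ident]
          smooth_fun_has_derivative[OF assms]])
  then show ?thesis
    by (simp add: frechet_derivative_at[symmetric])
qed

lemma mem_Sigma_set_iff:
  assumes "smooth_fun Gam"
  shows "x \<in> Sigma_set Gam L \<longleftrightarrow> (\<exists>z m p. x = ((fst z, Gam z), (m, p)) \<and>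
     (\<forall>w. m \<bullet> fst w + p \<bullet> frechet_derivative Gam (at z) w = frechet_derivative L (at z) w))"
  unfolding Sigma_set_def by (simp add: frechet_derivative_Gamma_map[OF assms] Gamma_map_def)

lemma has_derivative_Ham_comp:
  assumes "smooth_fun Gam" "smooth_fun L" "(k has_derivative k') (at y)"
  shows "((\<lambda>y. p \<bullet> Gam (k y) - L (k y)) has_derivative
     (\<lambda>h. p \<bullet> frechet_derivative Gam (at (k y)) (k' h) - frechet_derivative L (at (k y)) (k' h))) (at y)"
proof -
  have "((\<lambda>y. Gam (k y)) has_derivative (\<lambda>h. frechet_derivative Gam (at (k y)) (k' h))) (at y)"
    using diff_chain_at[OF assms(3) smooth_fun_has_derivative[OF assms(1)]] by (simp add: o_def)
  moreover have "((\<lambda>y. L (k y)) has_derivative (\<lambda>h. frechet_derivative L (at (k y)) (k' h))) (at y)"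
    using diff_chain_at[OF assms(3) smooth_fun_has_derivative[OF assms(2)]] by (simp add: o_def)
  ultimately show ?thesis
    by (intro has_derivative_diff bounded_linear.has_derivative[OF bounded_linear_inner_right])
qed

lemma dH_dq_eq:
  assumes "smooth_fun Gam" "smooth_fun L"
  shows "dH_dq Gam L q p u i = p \<bullet> frechet_derivative Gam (at (q, u)) (axis i 1, 0)
                                 - frechet_derivative L (at (q, u)) (axis i 1, 0)"
proof -
  have "((\<lambda>q'. (q', u)) has_derivative (\<lambda>h. (h, 0))) (at q)"
    by (rule has_derivative_Pair[OF has_derivative_ident has_derivative_const])
  from frechet_derivative_at[OF has_derivative_Ham_comp[where p=p, OF assms this], symmetric]
  show ?thesis
    unfolding dH_dq_def Ham_def by simp
qed

lemma dH_du_eq: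
  assumes "smooth_fun Gam" "smooth_fun L"
  shows "dH_du Gam L q p u a = p \<bullet> frechet_derivative Gam (at (q, u)) (0, axis a 1)
                                 - frechet_derivative L (at (q, u)) (0, axis a 1)"
proof -
  have "((\<lambda>u'. (q, u')) has_derivative (\<lambda>h. (0, h))) (at u)"
    by (rule has_derivative_Pair[OF has_derivative_const has_derivative_ident])
  from frechet_derivative_at[OF has_derivative_Ham_comp[where p=p, OF assms this], symmetric]
  show ?thesis
    unfolding dH_du_def Ham_def by simp
qed

lemma dH_dp_vec: "(\<chi> i. dH_dp Gam L q p u i) = Gam (q, u)"
proof -
  have "((\<lambda>p'. p' \<bullet> Gam (q, u) - L (q, u)) has_derivative (\<lambda>h. h \<bullet> Gam (q, u) - 0)) (at p)"
    by (intro has_derivative_diff bounded_linear.has_derivative[OF bounded_linear_inner_left]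
        has_derivative_ident has_derivative_const)
  then have "frechet_derivative (\<lambda>p'. Ham Gam L q p' u) (at p) = (\<lambda>h. h \<bullet> Gam (q, u))"
    unfolding Ham_def by (simp add: frechet_derivative_at[symmetric])
  then show ?thesis
    unfolding dH_dp_def by (simp add: vec_eq_iff inner_axis')
qed

lemma covector_condition_iff_Hamilton:
  fixes Gam :: "(real^'n) \<times> (real^'m) \<Rightarrow> real^'n" and L :: "(real^'n) \<times> (real^'m) \<Rightarrow> real"
  assumes sG: "smooth_fun Gam" and sL: "smooth_fun L"
  shows "(\<forall>w. m \<bullet> fst w + p \<bullet> frechet_derivative Gam (at (q, u)) w = frechet_derivative L (at (q, u)) w)
     \<longleftrightarrow> m = (\<chi> i. - dH_dq Gam L q p u i) \<and> (\<forall>a. dH_du Gam L q p u a = 0)"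
proof -
  define form where "form w = m \<bullet> fst w + p \<bullet> frechet_derivative Gam (at (q, u)) w
                         - frechet_derivative L (at (q, u)) w" for w
  have "((\<lambda>z. m \<bullet> fst z + p \<bullet> Gam z - L z) has_derivative form) (at (q, u))"
    unfolding form_def
    by (intro has_derivative_diff has_derivative_add
        bounded_linear.has_derivative[OF bounded_linear_inner_right]
        has_derivative_fst[OF has_derivative_ident] smooth_fun_has_derivative sG sL)
  then have lin: "linear form"
    by (rule has_derivative_linear)
  have "(\<forall>w. m \<bullet> fst w + p \<bullet> frechet_derivative Gam (at (q, u)) w = frechet_derivative L (at (q, u)) w)
     \<longleftrightarrow> form = (\<lambda>_. 0)"
    by (auto simp: form_def fun_eq_iff)
  also have "\<dots> \<longleftrightarrow> (\<forall>b\<in>Basis. form b = 0)"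
    using linear_eq_stdbasis[OF lin linear_zero] by auto
  also have "\<dots> \<longleftrightarrow> (\<forall>i. form (axis i 1, 0) = 0) \<and> (\<forall>a. form (0, axis a 1) = 0)"
    by (auto simp: Basis_prod_def Basis_vec_def ball_Un)
  also have "\<dots> \<longleftrightarrow> m = (\<chi> i. - dH_dq Gam L q p u i) \<and> (\<forall>a. dH_du Gam L q p u a = 0)"
    by (simp add: form_def dH_dq_eq[OF sG sL] dH_du_eq[OF sG sL] vec_eq_iff inner_axis
        algebra_simps eq_neg_iff_add_eq_0)
  finally show ?thesis .
qed

definition Hamilton_equations ::
  "((real^'n) \<times> (real^'m) \<Rightarrow> real^'n) \<Rightarrow> ((real^'n) \<times> (real^'m) \<Rightarrow> real)
     \<Rightarrow> (real \<Rightarrow> real^'n) \<Rightarrow> (real \<Rightarrow> real^'m) \<Rightarrow> (real \<Rightarrow> real^'n) \<Rightarrow> real \<Rightarrow> bool" where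
  "Hamilton_equations Gam L \<sigma> u p t \<longleftrightarrow>
     (p has_vector_derivative (\<chi> i. - dH_dq Gam L (\<sigma> t) (p t) (u t) i)) (at t) \<and>
     (\<forall>a. dH_du Gam L (\<sigma> t) (p t) (u t) a = 0) \<and>
     (\<sigma> has_vector_derivative (\<chi> i. dH_dp Gam L (\<sigma> t) (p t) (u t) i)) (at t) \<and>
     (\<chi> i. dH_dp Gam L (\<sigma> t) (p t) (u t) i) = Gam (\<sigma> t, u t)"

lemma Hamilton_equations_iff_covector_condition:
  assumes sG: "smooth_fun Gam" and sL: "smooth_fun L" and "smooth_fun \<sigma>" "smooth_fun p"
  shows "Hamilton_equations Gam L \<sigma> u p t \<longleftrightarrow>
    vector_derivative \<sigma> (at t) = Gam (\<sigma> t, u t) \<and>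
    (\<forall>w. vector_derivative p (at t) \<bullet> fst w + p t \<bullet> frechet_derivative Gam (at (\<sigma> t, u t)) w
           = frechet_derivative L (at (\<sigma> t, u t)) w)"
proof -
  have "(f has_vector_derivative v) (at t) \<longleftrightarrow> vector_derivative f (at t) = v"
    if "smooth_fun f" for f :: "real \<Rightarrow> real^'n" and v
    using smooth_fun_has_vector_derivative[OF that] vector_derivative_at by metis
  then show ?thesis
    unfolding Hamilton_equations_def dH_dp_vec covector_condition_iff_Hamilton[OF sG sL]
    using assms(3,4) by auto
qed

lemma has_vector_derivative_along_graph:
  fixes X :: "real \<times> 'a::euclidean_space \<Rightarrow> 'b::real_normed_vector"
  assumes "smooth_fun X" "(\<sigma> has_vector_derivative \<sigma>') (at t)"
  shows "((\<lambda>t. X (t, \<sigma> t)) has_vector_derivative frechet_derivative X (at (t, \<sigma> t)) (1, \<sigma>')) (at t)"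
proof -
  have "((\<lambda>t. (t, \<sigma> t)) has_derivative (\<lambda>h. (h, h *\<^sub>R \<sigma>'))) (at t)"
    using has_derivative_Pair[OF has_derivative_ident assms(2)[unfolded has_vector_derivative_def]] .
  from diff_chain_at[OF this smooth_fun_has_derivative[OF assms(1)]]
  have "((\<lambda>t. X (t, \<sigma> t)) has_derivative
      (\<lambda>h. frechet_derivative X (at (t, \<sigma> t)) (h, h *\<^sub>R \<sigma>'))) (at t)"
    by (simp add: o_def)
  moreover have "frechet_derivative X (at (t, \<sigma> t)) (h, h *\<^sub>R \<sigma>')
      = h *\<^sub>R frechet_derivative X (at (t, \<sigma> t)) (1, \<sigma>')" for h
  proof -
    have "linear (frechet_derivative X (at (t, \<sigma> t)))"
      using smooth_fun_has_derivative[OF assms(1)] has_derivative_linear by blast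
    moreover have "(h, h *\<^sub>R \<sigma>') = h *\<^sub>R (1::real, \<sigma>')"
      by simp
    ultimately show ?thesis
      by (metis linear_scale)
  qed
  ultimately show ?thesis
    unfolding has_vector_derivative_def by simp
qed

lemma pairing_complete_lift_has_integral:
  fixes p \<sigma> :: "real \<Rightarrow> real^'n" and X :: "real \<times> (real^'n) \<Rightarrow> real^'n"
  assumes sp: "smooth_fun p" and s\<sigma>: "smooth_fun \<sigma>" and sX: "smooth_fun X" and "t0 \<le> t1"
  shows "((\<lambda>t. pairing (vector_derivative p (at t), p t)
                  (complete_lift X t (\<sigma> t, vector_derivative \<sigma> (at t))))
          has_integral p t1 \<bullet> X (t1, \<sigma> t1) - p t0 \<bullet> X (t0, \<sigma> t0)) {t0..t1}"
proof -
  have "((\<lambda>t. p t \<bullet> X (t, \<sigma> t)) has_vector_derivative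
          pairing (vector_derivative p (at t), p t)
            (complete_lift X t (\<sigma> t, vector_derivative \<sigma> (at t)))) (at t)" for t
    using has_derivative_inner[
        OF smooth_fun_has_vector_derivative[OF sp, unfolded has_vector_derivative_def]
        has_vector_derivative_along_graph[OF sX smooth_fun_has_vector_derivative[OF s\<sigma>],
          unfolded has_vector_derivative_def]]
    unfolding has_vector_derivative_def pairing_def complete_lift_def
    by (simp add: algebra_simps inner_commute)
  then show ?thesis
    using \<open>t0 \<le> t1\<close>
    by (intro fundamental_theorem_of_calculus) (auto intro: has_vector_derivative_at_within)
qed

lemma vanishing_first_variation_imp_vector_derivative_eq:
  fixes M P \<sigma> :: "real \<Rightarrow> real^'n"
  assumes "t0 < t1" and sM: "smooth_fun M" and sP: "smooth_fun P" and s\<sigma>: "smooth_fun \<sigma>"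
    and vanish: "\<And>X. smooth_fun X \<Longrightarrow> X (t0, \<sigma> t0) = 0 \<Longrightarrow> X (t1, \<sigma> t1) = 0 \<Longrightarrow>
      integral {t0..t1} (\<lambda>t. pairing (M t, P t)
                               (complete_lift X t (\<sigma> t, vector_derivative \<sigma> (at t)))) = 0"
  shows "\<forall>t\<in>{t0..t1}. vector_derivative P (at t) = M t"
proof -
  define D where "D t = vector_derivative P (at t)" for t
  have sD: "smooth_fun D"
    unfolding D_def by (rule smooth_fun_vector_derivative[OF sP])
  have "\<forall>t\<in>{t0..t1}. M t $ i - D t $ i = 0" for i
  proof (rule fundamental_lemma_polynomial[OF \<open>t0 < t1\<close>])
    have "continuous_on {t0..t1} (\<lambda>t. M t $ i)" "continuous_on {t0..t1} (\<lambda>t. D t $ i)"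
      by (intro smooth_fun_continuous_on smooth_fun_bounded_linear[OF bounded_linear_vec_nth] sM sD)+
    then show cont: "continuous_on {t0..t1} (\<lambda>t. M t $ i - D t $ i)"
      by (rule continuous_on_diff)
    fix q :: "real \<Rightarrow> real"
    assume "real_polynomial_function q"
    define \<phi> where "\<phi> t = (t - t0) * (t1 - t) * q t" for t
    have "real_polynomial_function \<phi>"
      unfolding \<phi>_def using \<open>real_polynomial_function q\<close>
      by (intro real_polynomial_function.intros(4) real_polynomial_function_diff
          real_polynomial_function.intros(1)[OF bounded_linear_ident]
          real_polynomial_function.intros(2))
    then have \<phi>_cont: "continuous_on {t0..t1} \<phi>"
      using continuous_real_polymonial_function continuous_at_imp_continuous_on by blast
    define X where "X x = \<phi> (fst x) *\<^sub>R (axis i 1 :: real^'n)" for x :: "real \<times> (real^'n)"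
    have sX: "smooth_fun X"
      unfolding X_def[abs_def] by (rule smooth_fun_polynomial_profile[OF \<open>real_polynomial_function \<phi>\<close>])
    have X_ends: "X (t0, \<sigma> t0) = 0" "X (t1, \<sigma> t1) = 0"
      unfolding X_def \<phi>_def by simp_all
    let ?lift = "\<lambda>t. complete_lift X t (\<sigma> t, vector_derivative \<sigma> (at t))"
    have by_parts: "((\<lambda>t. pairing (D t, P t) (?lift t)) has_integral 0) {t0..t1}"
      using pairing_complete_lift_has_integral[OF sP s\<sigma> sX less_imp_le[OF \<open>t0 < t1\<close>]] X_ends
      by (simp add: D_def)
    have split: "pairing (M t, P t) (?lift t) = (M t $ i - D t $ i) * \<phi> t + pairing (D t, P t) (?lift t)"
      for t
      by (simp add: pairing_def complete_lift_def X_def inner_axis algebra_simps)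
    have "(\<lambda>t. (M t $ i - D t $ i) * \<phi> t) integrable_on {t0..t1}"
      by (intro integrable_continuous_interval continuous_on_mult cont \<phi>_cont)
    then have "integral {t0..t1} (\<lambda>t. pairing (M t, P t) (?lift t))
        = integral {t0..t1} (\<lambda>t. (M t $ i - D t $ i) * \<phi> t)"
      unfolding split using integral_add[OF _ has_integral_integrable[OF by_parts]]
        integral_unique[OF by_parts] by simp
    then show "integral {t0..t1} (\<lambda>t. (M t $ i - D t $ i) * ((t - t0) * (t1 - t) * q t)) = 0"
      using vanish[OF sX X_ends] by (simp add: \<phi>_def)
  qed
  then show ?thesis
    by (simp add: D_def vec_eq_iff)
qed

lemma gen_var_solution_if_Hamilton_equations:
  assumes sG: "smooth_fun Gam" and sL: "smooth_fun L" and "t0 < t1"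
    and s\<sigma>: "smooth_fun \<sigma>" and sp: "smooth_fun p"
    and Hamilton: "\<forall>t\<in>{t0..t1}. Hamilton_equations Gam L \<sigma> u p t"
  shows "gen_var_solution (Sigma_set Gam L) t0 t1 \<sigma>"
proof -
  define \<mu> where "\<mu> t = ((\<sigma> t, vector_derivative \<sigma> (at t)), (vector_derivative p (at t), p t))"
    for t
  have "smooth_fun \<mu>"
    unfolding \<mu>_def[abs_def]
    by (intro smooth_fun_Pair smooth_fun_vector_derivative s\<sigma> sp)
  moreover have "\<mu> t \<in> Sigma_set Gam L" if "t \<in> {t0..t1}" for t
    using Hamilton that
    unfolding Hamilton_equations_iff_covector_condition[OF sG sL s\<sigma> sp] mem_Sigma_set_iff[OF sG]
    by (intro exI[of _ "(\<sigma> t, u t)"]) (auto simp: \<mu>_def)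
  moreover have "integral {t0..t1}
      (\<lambda>t. pairing (snd (\<mu> t)) (complete_lift X t (\<sigma> t, vector_derivative \<sigma> (at t)))) = 0"
    if "smooth_fun X" "X (t0, \<sigma> t0) = 0" "X (t1, \<sigma> t1) = 0" for X
    using integral_unique[OF pairing_complete_lift_has_integral[OF sp s\<sigma> that(1)
        less_imp_le[OF \<open>t0 < t1\<close>]]] that(2,3)
    by (simp add: \<mu>_def)
  ultimately show ?thesis
    unfolding gen_var_solution_def by (intro exI[of _ \<mu>]) (auto simp: \<mu>_def)
qed

lemma Hamilton_equations_if_gen_var_solution:
  assumes sG: "smooth_fun Gam" and sL: "smooth_fun L" and "t0 < t1" and s\<sigma>: "smooth_fun \<sigma>"
    and "gen_var_solution (Sigma_set Gam L) t0 t1 \<sigma>"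
  shows "\<exists>u p. smooth_fun p \<and> (\<forall>t\<in>{t0..t1}. Hamilton_equations Gam L \<sigma> u p t)"
proof -
  obtain \<mu> where s\<mu>: "smooth_fun \<mu>" and mem: "\<forall>t\<in>{t0..t1}. \<mu> t \<in> Sigma_set Gam L"
    and base: "\<forall>t\<in>{t0..t1}. fst (\<mu> t) = (\<sigma> t, vector_derivative \<sigma> (at t))"
    and vanish: "\<forall>X. smooth_fun X \<and> X (t0, \<sigma> t0) = 0 \<and> X (t1, \<sigma> t1) = 0 \<longrightarrow>
      integral {t0..t1} (\<lambda>t. pairing (snd (\<mu> t)) (complete_lift X t (\<sigma> t, vector_derivative \<sigma> (at t)))) = 0"
    using assms(5) unfolding gen_var_solution_def by (elim exE conjE) (rule that; assumption)
  define M P where "M t = fst (snd (\<mu> t))" and "P t = snd (snd (\<mu> t))" for t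
  have s_snd: "smooth_fun (\<lambda>t. snd (\<mu> t))"
    by (rule smooth_fun_bounded_linear[OF bounded_linear_snd s\<mu>])
  have sM: "smooth_fun M" and sP: "smooth_fun P"
    unfolding M_def[abs_def] P_def[abs_def]
    by (rule smooth_fun_bounded_linear[OF bounded_linear_fst s_snd]
        smooth_fun_bounded_linear[OF bounded_linear_snd s_snd])+
  have "\<forall>t\<in>{t0..t1}. \<exists>v. vector_derivative \<sigma> (at t) = Gam (\<sigma> t, v) \<and>
      (\<forall>w. M t \<bullet> fst w + P t \<bullet> frechet_derivative Gam (at (\<sigma> t, v)) w
             = frechet_derivative L (at (\<sigma> t, v)) w)"
  proof
    fix t assume "t \<in> {t0..t1}"
    obtain z m p' where z: "\<mu> t = ((fst z, Gam z), (m, p'))"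
      "\<forall>w. m \<bullet> fst w + p' \<bullet> frechet_derivative Gam (at z) w = frechet_derivative L (at z) w"
      using mem \<open>t \<in> {t0..t1}\<close> unfolding mem_Sigma_set_iff[OF sG] by blast
    then have "z = (\<sigma> t, snd z)" "Gam z = vector_derivative \<sigma> (at t)"
      using base \<open>t \<in> {t0..t1}\<close> by (auto simp: prod_eq_iff)
    with z show "\<exists>v. vector_derivative \<sigma> (at t) = Gam (\<sigma> t, v) \<and>
      (\<forall>w. M t \<bullet> fst w + P t \<bullet> frechet_derivative Gam (at (\<sigma> t, v)) w
             = frechet_derivative L (at (\<sigma> t, v)) w)"
      unfolding M_def P_def by (intro exI[of _ "snd z"]) auto
  qed
  from bchoice[OF this] obtain u where u: "\<forall>t\<in>{t0..t1}. vector_derivative \<sigma> (at t) = Gam (\<sigma> t, u t) \<and>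
      (\<forall>w. M t \<bullet> fst w + P t \<bullet> frechet_derivative Gam (at (\<sigma> t, u t)) w
             = frechet_derivative L (at (\<sigma> t, u t)) w)"
    by blast
  have "integral {t0..t1} (\<lambda>t. pairing (M t, P t)
      (complete_lift X t (\<sigma> t, vector_derivative \<sigma> (at t)))) = 0"
    if "smooth_fun X" "X (t0, \<sigma> t0) = 0" "X (t1, \<sigma> t1) = 0" for X
    using vanish that by (simp add: M_def P_def)
  then have "\<forall>t\<in>{t0..t1}. vector_derivative P (at t) = M t"
    by (rule vanishing_first_variation_imp_vector_derivative_eq[OF \<open>t0 < t1\<close> sM sP s\<sigma>])
  with u have "\<forall>t\<in>{t0..t1}. Hamilton_equations Gam L \<sigma> u P t"
    by (simp add: Hamilton_equations_iff_covector_condition[OF sG sL s\<sigma> sP])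
  with sP show ?thesis
    by blast
qed

theorem mainTheorem7:
  fixes Gam :: "(real^'n) \<times> (real^'m) \<Rightarrow> real^'n"
    and L :: "(real^'n) \<times> (real^'m) \<Rightarrow> real"
    and \<sigma> :: "real \<Rightarrow> real^'n"
    and t0 t1 :: real
  assumes "smooth_fun Gam" and "smooth_fun L"
    and "t0 < t1" and "smooth_fun \<sigma>"
  shows "gen_var_solution (Sigma_set Gam L) t0 t1 \<sigma> \<longleftrightarrow>
    (\<exists>(u :: real \<Rightarrow> real^'m) (mt :: real \<Rightarrow> real^'n).
       smooth_fun mt \<and>
       (\<forall>t\<in>{t0..t1}.
          (mt has_vector_derivative (\<chi> i. - dH_dq Gam L (\<sigma> t) (mt t) (u t) i)) (at t) \<and>
          (\<forall>a. dH_du Gam L (\<sigma> t) (mt t) (u t) a = 0) \<and>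
          (\<sigma> has_vector_derivative (\<chi> i. dH_dp Gam L (\<sigma> t) (mt t) (u t) i)) (at t) \<and>
          (\<chi> i. dH_dp Gam L (\<sigma> t) (mt t) (u t) i) = Gam (\<sigma> t, u t)))"
    (is "?solution \<longleftrightarrow> ?Hamilton")
proof -
  have "?Hamilton \<longleftrightarrow> (\<exists>u p. smooth_fun p \<and> (\<forall>t\<in>{t0..t1}. Hamilton_equations Gam L \<sigma> u p t))"
    by (simp only: Hamilton_equations_def)
  also have "\<dots> \<longleftrightarrow> ?solution"
    using Hamilton_equations_if_gen_var_solution[OF assms]
      gen_var_solution_if_Hamilton_equations[OF assms(1-4)] by blast
  finally show ?thesis
    by (rule sym)
qed

end
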